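(* Let $v\in\mathbb{N}$ and let $S,S'\subset\mathbb{N}_0$ be finite sets of consecutive integers with $S'>S$ and $d(S,S')=1$. (a) $S$ is down-admissible for $v$ and $S'$ is down-admissible for $v[S]$ if and only if $S'$ is down-admissible for $v$ and $S$ is up-admissible for $v[S']$. In this case $v[S][S']=v[S'](S)$. (b) $S'$ is up-admissible for $v$ and $S$ is up-admissible for $v(S')$ if and only if $S$ is down-admissible for $v$ and $S'$ is up-admissible for $v[S]$. In this case $v(S')(S)=v[S](S')$.
   Context: Fix a prime $p$; $\mathbb{N}=\{1,2,\dots\}$, $\mathbb{N}_0=\mathbb{N}\cup\{0\}$. For $v\in\mathbb{N}$ write $v=\sum_{i=0}^{j}a_ip^i$ with $0\le a_i\le p-1$, $a_j\ne0$, and $a_i=0$ for $i>j$ (the digits of $v$). A finite $S\subset\mathbb{N}_0$ splits uniquely into maximal subsets of consecutive integers (blocks). $S$ is down-admissible for $v$ if (d1) $a_{\min B}\ne0$ for every block $B$ of $S$ and (d2) $s\in S$, $a_{s+1}=0$ imply $s+1\in S$; then $v[S]:=\sum_i\epsilon_ia_ip^i$ with $\epsilon_i=-1$ for $i\in S$ and $\epsilon_i=1$ otherwise. $S$ is up-admissible for $v$ if (u1) $a_{\min B}\ne0$ for every block $B$ of $S$ and (u2) $s\in S$, $a_{s+1}=p-1$ imply $s+1\in S$; then $v(S):=\sum_ka'_kp^k$ with $a'_k=-a_k$ for $k\in S$, $a'_k=a_k+2$ for $k\notin S$, $k-1\in S$, and $a'_k=a_k$ otherwise. Admissibility for $v[S]$,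 $v(S)$ etc. refers to the $p$-adic digits of these numbers. $d(A,B)=\min\{|a-b|:a\in A,b\in B\}$; $S'>S$ means every element of $S'$ exceeds every element of $S$. *)

theory Defs
  imports Main "HOL-Computational_Algebra.Primes"
begin

text \<open>The i-th p-adic digit of an integer n (used only for n \<ge> 1).\<close>
definition digit :: "nat \<Rightarrow> int \<Rightarrow> nat \<Rightarrow> int" where
  "digit p n i = (n div (int p ^ i)) mod int p"

definition block_min :: "nat set \<Rightarrow> nat \<Rightarrow> bool" where
  "block_min S i \<longleftrightarrow> i \<in> S \<and> (i = 0 \<or> i - 1 \<notin> S)"

text \<open>Admissibility is only defined for v in N = {1,2,...}; we require v \<ge> 1.\<close>
definition down_adm :: "nat \<Rightarrow> int \<Rightarrow> nat set \<Rightarrow> bool" where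
  "down_adm p v S \<longleftrightarrow> v \<ge> 1 \<and> finite S \<and>
     (\<forall>i. block_min S i \<longrightarrow> digit p v i \<noteq> 0) \<and>
     (\<forall>s\<in>S. digit p v (s + 1) = 0 \<longrightarrow> s + 1 \<in> S)"

definition up_adm :: "nat \<Rightarrow> int \<Rightarrow> nat set \<Rightarrow> bool" where
  "up_adm p v S \<longleftrightarrow> v \<ge> 1 \<and> finite S \<and>
     (\<forall>i. block_min S i \<longrightarrow> digit p v i \<noteq> 0) \<and>
     (\<forall>s\<in>S. digit p v (s + 1) = int p - 1 \<longrightarrow> s + 1 \<in> S)"

text \<open>v[S]. Digits of v vanish at indices > v, so summing over {..nat v} \<union> S suffices.\<close>
definition down_val :: "nat \<Rightarrow> int \<Rightarrow> nat set \<Rightarrow> int" where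
  "down_val p v S = (\<Sum>i\<in>{..nat v} \<union> S.
      (if i \<in> S then -1 else 1) * digit p v i * int p ^ i)"

definition up_digit :: "nat \<Rightarrow> int \<Rightarrow> nat set \<Rightarrow> nat \<Rightarrow> int" where
  "up_digit p v S k = (if k \<in> S then - digit p v k
      else if k \<ge> 1 \<and> k - 1 \<in> S then digit p v k + 2 else digit p v k)"

definition up_val :: "nat \<Rightarrow> int \<Rightarrow> nat set \<Rightarrow> int" where
  "up_val p v S = (\<Sum>k\<in>{..nat v} \<union> S \<union> Suc ` S. up_digit p v S k * int p ^ k)"

definition consec :: "nat set \<Rightarrow> bool" where
  "consec S \<longleftrightarrow> finite S \<and> S \<noteq> {} \<and> S = {Min S..Max S}"

definition set_dist :: "nat set \<Rightarrow> nat set \<Rightarrow> nat" where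
  "set_dist A B = Min {nat \<bar>int a - int b\<bar> | a b. a \<in> A \<and> b \<in> B}"

definition set_gt :: "nat set \<Rightarrow> nat set \<Rightarrow> bool" where
  "set_gt S' S \<longleftrightarrow> (\<forall>x\<in>S'. \<forall>y\<in>S. y < x)"

end

(*
  For a block S = {x..y} let B be the number formed by the digits of v in positions x..y; then
  v[S] = v - 2 p^x B and v(S) = v[S] + 2 p^(y+1). So v[S] and v(S) keep the digits of v below x
  and have digit (-a_x) mod p at x. If a_x is nonzero, subtracting 2 p^x B lowers the part of v
  above position y by exactly one, and if moreover a_(y+1) is nonzero this borrow only decreases
  the digit at y+1.

  For S = {a..b} and S' = {b+1..c} every admissibility condition of the statement therefore
  becomes a condition on the three digits at a, b+1 and c+1: both sides of (a) say that they are
  nonzero, not in {0,1} and nonzero, respectively; in (b) the last one is replaced by "not p-1".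
  Both iterated values in (a) equal v - 2 p^a B - 2 p^(b+1) B' + 2 p^(b+1) (B, B' the numbers
  formed by the digits in S, S'), and both values in (b) exceed this by 2 p^(c+1).
*)

theory Submission
  imports Defs
begin

lemma minus_one_mod_div:
  fixes n m :: int
  assumes "0 < m" "n mod m \<noteq> 0"
  shows "(n - 1) mod m = n mod m - 1" and "(n - 1) div m = n div m"
proof -
  have bounds: "0 \<le> n mod m - 1" "n mod m - 1 < m"
    using assms pos_mod_sign[of m n] pos_mod_bound[of m n] by linarith+
  have n: "n - 1 = (n mod m - 1) + m * (n div m)"
    by (simp add: algebra_simps)
  show "(n - 1) mod m = n mod m - 1"
    by (subst n, subst mod_mult_self2) (rule mod_pos_pos_trivial[OF bounds])
  show "(n - 1) div m = n div m"
    using assms(1) by (subst n, subst div_mult_self2) (simp_all add: div_pos_pos_trivial[OF bounds])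
qed

lemma mod_pow_neq_0:
  fixes n :: int
  assumes "n mod q \<noteq> 0" "0 < j"
  shows "n mod q ^ j \<noteq> 0"
proof
  assume "n mod q ^ j = 0"
  then have "n mod q ^ j mod q = 0" by simp
  then show False
    using assms by (simp add: mod_mod_cancel)
qed

definition digit_block :: "nat \<Rightarrow> int \<Rightarrow> nat \<Rightarrow> nat \<Rightarrow> int" where
  "digit_block p n x y = n mod int p ^ Suc y div int p ^ x"

lemma digit_add_pow_mult:
  assumes "0 < p" "i < k"
  shows "digit p (n + int p ^ k * m) i = digit p n i"
proof -
  obtain j where "k = i + Suc j" using assms(2) less_iff_Suc_add by auto
  then have "n + int p ^ k * m = n + int p ^ i * (int p * (int p ^ j * m))"
    by (simp add: power_add ac_simps)
  also have "\<dots> div int p ^ i = n div int p ^ i + int p * (int p ^ j * m)"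
    using assms(1) by simp
  finally have "(n + int p ^ k * m) div int p ^ i = n div int p ^ i + int p * (int p ^ j * m)" .
  then show ?thesis
    by (simp add: digit_def)
qed

lemma digit_mod_pow:
  assumes "0 < p" "i < k"
  shows "digit p (n mod int p ^ k) i = digit p n i"
  using digit_add_pow_mult[OF assms, of "n mod int p ^ k" "n div int p ^ k"] by simp

lemma digit_div_pow:
  assumes "0 < p"
  shows "digit p (n div int p ^ k) j = digit p n (j + k)"
proof -
  have "int p ^ (j + k) = int p ^ k * int p ^ j"
    by (simp add: power_add mult.commute)
  then show ?thesis
    using assms by (simp add: digit_def zdiv_zmult2_eq)
qed

lemma digit_of_0 [simp]: "digit p 0 i = 0"
  by (simp add: digit_def)

lemma digit_mod_p [simp]: "digit p n i mod int p = digit p n i"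
  by (simp add: digit_def)

lemma less_pow_if_large:
  assumes "2 \<le> p" "0 \<le> w" "nat w < i"
  shows "w < int p ^ i"
proof -
  have "nat w < 2 ^ i" using assms(3) less_exp[of i] by linarith
  also have "(2::nat) ^ i \<le> p ^ i" using assms(1) by (simp add: power_mono)
  finally show ?thesis using assms(2) by (metis int_nat_eq of_nat_less_iff of_nat_power)
qed

lemma sum_digits_lessThan:
  assumes "0 < p"
  shows "(\<Sum>i<n. digit p w i * int p ^ i) = w mod int p ^ n"
proof (induction n)
  case (Suc n)
  have "w mod int p ^ Suc n = int p ^ n * (w div int p ^ n mod int p) + w mod int p ^ n"
    using zmod_zmult2_eq[of "int p" w "int p ^ n"] by (simp add: mult.commute)
  then show ?case using Suc by (simp add: digit_def mult.commute)
qed simp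

lemma sum_digits_eq_self:
  assumes "2 \<le> p" "0 \<le> w" "finite U" "{..nat w} \<subseteq> U"
  shows "(\<Sum>i\<in>U. digit p w i * int p ^ i) = w"
proof -
  have "(\<Sum>i\<in>U. digit p w i * int p ^ i) = (\<Sum>i<Suc (nat w). digit p w i * int p ^ i)"
    using assms less_pow_if_large[OF assms(1,2)]
    by (intro sum.mono_neutral_right) (auto simp: digit_def lessThan_Suc_atMost)
  also have "\<dots> = w mod int p ^ Suc (nat w)"
    using assms(1) by (intro sum_digits_lessThan) simp
  also have "\<dots> = w"
    using assms(2) less_pow_if_large[OF assms(1,2), of "Suc (nat w)"]
    by (intro mod_pos_pos_trivial) simp_all
  finally show ?thesis .
qed

lemma mod_pow_eq_digit_block:
  assumes "x \<le> Suc y"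
  shows "n mod int p ^ Suc y = n mod int p ^ x + int p ^ x * digit_block p n x y"
proof -
  have "int p ^ x dvd int p ^ Suc y" using assms by (rule le_imp_power_dvd)
  then show ?thesis
    unfolding digit_block_def by (metis mod_mod_cancel mult_div_mod_eq add.commute)
qed

lemma sum_digits_atLeastAtMost:
  assumes "0 < p" "x \<le> Suc y"
  shows "(\<Sum>i\<in>{x..y}. digit p w i * int p ^ i) = int p ^ x * digit_block p w x y"
proof -
  have "{..<Suc y} = {..<x} \<union> {x..y}" using assms(2) by auto
  then have "(\<Sum>i<Suc y. digit p w i * int p ^ i)
      = (\<Sum>i<x. digit p w i * int p ^ i) + (\<Sum>i\<in>{x..y}. digit p w i * int p ^ i)"
    by (simp add: sum.union_disjoint ivl_disj_int)
  then show ?thesis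
    using sum_digits_lessThan[OF assms(1)] mod_pow_eq_digit_block[OF assms(2)] by simp
qed

lemma digit_block_nonneg: "0 < p \<Longrightarrow> 0 \<le> digit_block p n x y"
  by (simp add: digit_block_def pos_imp_zdiv_nonneg_iff)

lemma digit_block_mod_pow:
  assumes "Suc y \<le> k"
  shows "digit_block p (n mod int p ^ k) x y = digit_block p n x y"
  unfolding digit_block_def using le_imp_power_dvd[OF assms, of "int p"] by (metis mod_mod_cancel)

lemma digit_block_eq_div_mod:
  assumes "0 < p" "x \<le> Suc y"
  shows "digit_block p n x y = n div int p ^ x mod int p ^ (Suc y - x)"
proof -
  have "int p ^ Suc y = int p ^ x * int p ^ (Suc y - x)"
    using assms(2) by (simp flip: power_add)
  then show ?thesis
    using assms(1) by (simp add: digit_block_def zmod_zmult2_eq)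
qed

lemma digit_block_mod_p:
  assumes "0 < p" "x \<le> y"
  shows "digit_block p n x y mod int p = digit p n x"
  using assms digit_mod_pow[OF assms(1), of x "Suc y" n]
  by (simp add: digit_block_def digit_def)

lemma signed_digit_sum:
  assumes "2 \<le> p" "0 \<le> w" "finite U" "{..nat w} \<subseteq> U" "S \<subseteq> U"
  shows "(\<Sum>i\<in>U. (if i \<in> S then -1 else 1) * digit p w i * int p ^ i)
           = w - 2 * (\<Sum>i\<in>S. digit p w i * int p ^ i)"
proof -
  have "(\<Sum>i\<in>U. (if i \<in> S then -1 else 1) * digit p w i * int p ^ i)
      = (\<Sum>i\<in>U. digit p w i * int p ^ i - 2 * (if i \<in> S then digit p w i * int p ^ i else 0))"
    by (rule sum.cong) auto
  also have "\<dots> = w - 2 * (\<Sum>i\<in>U \<inter> S. digit p w i * int p ^ i)"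
    using assms by (simp add: sum_subtractf sum_distrib_left sum.inter_restrict sum_digits_eq_self)
  finally show ?thesis
    using assms(5) by (simp add: Int_absorb1)
qed

lemma down_val_eq:
  assumes "2 \<le> p" "0 \<le> w" "finite S"
  shows "down_val p w S = w - 2 * (\<Sum>i\<in>S. digit p w i * int p ^ i)"
  unfolding down_val_def using assms by (intro signed_digit_sum) auto

lemma down_val_atLeastAtMost:
  assumes "2 \<le> p" "0 \<le> w" "x \<le> y"
  shows "down_val p w {x..y} = w - 2 * int p ^ x * digit_block p w x y"
  using assms by (simp add: down_val_eq sum_digits_atLeastAtMost)

lemma up_val_eq_down_val:
  assumes "2 \<le> p" "0 \<le> w" "x \<le> y"
  shows "up_val p w {x..y} = down_val p w {x..y} + 2 * int p ^ Suc y"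
proof -
  let ?U = "{..nat w} \<union> {x..y} \<union> Suc ` {x..y}"
  have "up_val p w {x..y} = (\<Sum>k\<in>?U. (if k \<in> {x..y} then -1 else 1) * digit p w k * int p ^ k
      + (if k = Suc y then 2 * int p ^ k else 0))"
    unfolding up_val_def using assms(3) by (intro sum.cong) (auto simp: up_digit_def algebra_simps)
  also have "\<dots> = w - 2 * (\<Sum>i\<in>{x..y}. digit p w i * int p ^ i) + 2 * int p ^ Suc y"
    using signed_digit_sum[OF assms(1,2), of ?U "{x..y}"] assms(3)
    by (simp add: sum.distrib le_supI1)
  finally show ?thesis
    using assms by (simp add: down_val_eq)
qed

lemma block_min_atLeastAtMost: "x \<le> y \<Longrightarrow> block_min {x..y} i \<longleftrightarrow> i = x"
  unfolding block_min_def by auto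

lemma atLeastAtMost_Suc_closed_iff:
  assumes "x \<le> y"
  shows "(\<forall>s\<in>{x..y}. P (s + 1) \<longrightarrow> s + 1 \<in> {x..y}) \<longleftrightarrow> \<not> P (Suc y)"
  using assms by (auto simp: le_Suc_eq) (metis le_antisym not_less_eq_eq)

lemma down_adm_atLeastAtMost:
  "x \<le> y \<Longrightarrow>
    down_adm p w {x..y} \<longleftrightarrow> 1 \<le> w \<and> digit p w x \<noteq> 0 \<and> digit p w (Suc y) \<noteq> 0"
  using atLeastAtMost_Suc_closed_iff[of x y "\<lambda>n. digit p w n = 0"]
  by (simp add: down_adm_def block_min_atLeastAtMost)

lemma up_adm_atLeastAtMost:
  "x \<le> y \<Longrightarrow>
    up_adm p w {x..y} \<longleftrightarrow> 1 \<le> w \<and> digit p w x \<noteq> 0 \<and> digit p w (Suc y) \<noteq> int p - 1"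
  using atLeastAtMost_Suc_closed_iff[of x y "\<lambda>n. digit p w n = int p - 1"]
  by (simp add: up_adm_def block_min_atLeastAtMost)

lemma digit_less: "0 < p \<Longrightarrow> digit p n i < int p"
  by (simp add: digit_def)

lemma minus_digit_mod_p:
  "(- digit p n i) mod int p = (if digit p n i = 0 then 0 else int p - digit p n i)"
  by (simp add: zmod_zminus1_eq_if)

lemma digit_add_pow_mult_self:
  assumes "0 < p"
  shows "digit p (n + int p ^ x * m) x = (digit p n x + m) mod int p"
  using assms by (simp add: digit_def) (metis add.commute mod_add_left_eq)

context
  fixes p :: nat and V :: int and x y :: nat
  assumes p: "2 \<le> p" and V: "0 \<le> V" and xy: "x \<le> y"
begin

lemma down_val_mod_pow: "down_val p V {x..y} mod int p ^ x = V mod int p ^ x"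
proof -
  have "down_val p V {x..y} = V + int p ^ x * (- 2 * digit_block p V x y)"
    using p V xy by (simp add: down_val_atLeastAtMost)
  then show ?thesis
    by (simp only: mod_mult_self2)
qed

lemma up_val_mod_pow: "up_val p V {x..y} mod int p ^ x = V mod int p ^ x"
proof -
  have "up_val p V {x..y} = down_val p V {x..y} + int p ^ x * (2 * int p ^ (Suc y - x))"
    using p V xy by (simp add: up_val_eq_down_val flip: power_add)
  then show ?thesis
    using down_val_mod_pow by simp
qed

lemma digit_down_val_min: "digit p (down_val p V {x..y}) x = (- digit p V x) mod int p"
proof -
  have "down_val p V {x..y} = V + int p ^ x * (- 2 * digit_block p V x y)"
    using p V xy by (simp add: down_val_atLeastAtMost)
  then have "digit p (down_val p V {x..y}) x = (digit p V x - 2 * digit_block p V x y) mod int p"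
    using p by (simp only:) (subst digit_add_pow_mult_self, simp_all)
  also have "\<dots> = (digit p V x - 2 * digit p V x) mod int p"
  proof (rule mod_diff_cong)
    show "2 * digit_block p V x y mod int p = 2 * digit p V x mod int p"
      using p xy digit_block_mod_p[of p x y V] by (intro mod_mult_cong) simp_all
  qed simp
  finally show ?thesis
    by simp
qed

lemma digit_up_val_min: "digit p (up_val p V {x..y}) x = (- digit p V x) mod int p"
  using p V xy digit_add_pow_mult[of p x "Suc y" "down_val p V {x..y}" 2]
  by (simp add: up_val_eq_down_val digit_down_val_min mult.commute del: power_Suc)

lemma down_val_div_pow:
  assumes "digit p V x \<noteq> 0"
  shows "down_val p V {x..y} div int p ^ Suc y = V div int p ^ Suc y - 1"
proof -
  let ?B = "digit_block p V x y" and ?r = "V mod int p ^ x"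
  let ?M = "V mod int p ^ Suc y" and ?H = "V div int p ^ Suc y"
  have "?B \<noteq> 0"
    using assms p xy digit_block_mod_p[of p x y V] by auto
  then have "1 \<le> ?B"
    using p digit_block_nonneg[of p V x y] by linarith
  moreover have "?r < int p ^ x" "0 \<le> ?r" "?M < int p ^ Suc y"
    using p by simp_all
  moreover have M: "?M = ?r + int p ^ x * ?B"
    using xy by (intro mod_pow_eq_digit_block) simp
  ultimately have L: "0 \<le> ?r - int p ^ x * ?B + int p ^ Suc y"
    "?r - int p ^ x * ?B + int p ^ Suc y < int p ^ Suc y"
    using mult_left_mono[of 1 ?B "int p ^ x"] by auto
  have "down_val p V {x..y} = (?r - int p ^ x * ?B + int p ^ Suc y) + int p ^ Suc y * (?H - 1)"
    using down_val_atLeastAtMost[OF p V xy] M div_mult_mod_eq[of V "int p ^ Suc y"]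
    by (simp add: algebra_simps)
  also have "\<dots> div int p ^ Suc y = ?H - 1"
    using p div_pos_pos_trivial[OF L] by (subst div_mult_self2) simp_all
  finally show ?thesis .
qed

lemma up_val_div_pow:
  assumes "digit p V x \<noteq> 0"
  shows "up_val p V {x..y} div int p ^ Suc y = V div int p ^ Suc y + 1"
  using p V xy by (simp add: up_val_eq_down_val down_val_div_pow[OF assms] del: power_Suc)

lemma down_val_pos:
  assumes "digit p V x \<noteq> 0" "digit p V (Suc y) \<noteq> 0"
  shows "1 \<le> down_val p V {x..y}"
proof -
  have "V div int p ^ Suc y \<noteq> 0"
    using assms(2) by (auto simp: digit_def simp del: power_Suc)
  moreover have "0 \<le> V div int p ^ Suc y"
    using V p by (simp add: pos_imp_zdiv_nonneg_iff del: power_Suc)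
  ultimately have "0 \<le> down_val p V {x..y} div int p ^ Suc y"
    by (simp add: down_val_div_pow[OF assms(1)] del: power_Suc)
  moreover have "digit p (down_val p V {x..y}) x \<noteq> 0"
    using assms(1) p digit_less[of p V x] by (simp add: digit_down_val_min minus_digit_mod_p)
  ultimately show ?thesis
    using p by (cases "down_val p V {x..y} = 0") (auto simp: pos_imp_zdiv_nonneg_iff)
qed

lemma up_val_pos:
  assumes "digit p V x \<noteq> 0"
  shows "1 \<le> up_val p V {x..y}"
proof -
  have "0 \<le> up_val p V {x..y} div int p ^ Suc y"
    using V p by (simp add: up_val_div_pow[OF assms] pos_imp_zdiv_nonneg_iff del: power_Suc)
  moreover have "digit p (up_val p V {x..y}) x \<noteq> 0"
    using assms p digit_less[of p V x] by (simp add: digit_up_val_min minus_digit_mod_p)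
  ultimately show ?thesis
    using p by (cases "up_val p V {x..y} = 0") (auto simp: pos_imp_zdiv_nonneg_iff)
qed

context
  assumes x_digit: "digit p V x \<noteq> 0" and Suc_y_digit: "digit p V (Suc y) \<noteq> 0"
begin

lemma div_pow_Suc_mod_pow_neq_0:
  "0 < j \<Longrightarrow> V div int p ^ Suc y mod int p ^ j \<noteq> 0"
  using Suc_y_digit mod_pow_neq_0 by (simp add: digit_def del: power_Suc)

lemma digit_down_val_Suc_max: "digit p (down_val p V {x..y}) (Suc y) = digit p V (Suc y) - 1"
proof -
  have "digit p (down_val p V {x..y}) (Suc y) = (V div int p ^ Suc y - 1) mod int p"
    using p digit_div_pow[of p "down_val p V {x..y}" "Suc y" 0]
    by (simp add: down_val_div_pow[OF x_digit] digit_def del: power_Suc)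
  also have "\<dots> = digit p V (Suc y) - 1"
    using p div_pow_Suc_mod_pow_neq_0[of 1] by (simp add: minus_one_mod_div digit_def del: power_Suc)
  finally show ?thesis .
qed

lemma digit_down_val_above:
  assumes "Suc y < k"
  shows "digit p (down_val p V {x..y}) k = digit p V k"
proof -
  have "digit p (down_val p V {x..y}) k = digit p (V div int p ^ Suc y - 1) (k - Suc y)"
    using p assms digit_div_pow[of p "down_val p V {x..y}" "Suc y" "k - Suc y"]
    by (simp add: down_val_div_pow[OF x_digit] del: power_Suc)
  also have "\<dots> = digit p (V div int p ^ Suc y) (k - Suc y)"
    using p assms div_pow_Suc_mod_pow_neq_0[of "k - Suc y"]
    by (simp add: digit_def minus_one_mod_div del: power_Suc)
  also have "\<dots> = digit p V k"
    using p assms by (simp add: digit_div_pow del: power_Suc)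
  finally show ?thesis .
qed

lemma digit_block_down_val_above:
  assumes "y < z"
  shows "digit_block p (down_val p V {x..y}) (Suc y) z = digit_block p V (Suc y) z - 1"
  using p assms div_pow_Suc_mod_pow_neq_0[of "z - y"]
  by (simp add: digit_block_eq_div_mod down_val_div_pow[OF x_digit] minus_one_mod_div del: power_Suc)

end

end

context
  fixes p :: nat and V :: int and a b c :: nat
  assumes p: "2 \<le> p" and V: "1 \<le> V" and ab: "a \<le> b" and bc: "b < c"
begin

lemmas V_nonneg = order.trans[OF zero_le_one V]

lemmas Suc_b_le_c = Suc_leI[OF bc]

lemmas upper_vals_mod_pow =
  down_val_mod_pow[OF p V_nonneg Suc_b_le_c] up_val_mod_pow[OF p V_nonneg Suc_b_le_c]

lemma lower_block_digits_unchanged: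
  assumes "n mod int p ^ Suc b = V mod int p ^ Suc b"
  shows "digit p n a = digit p V a" and "digit_block p n a b = digit_block p V a b"
proof -
  have "0 < p" "a < Suc b"
    using p ab by simp_all
  then show "digit p n a = digit p V a"
    by (metis assms digit_mod_pow)
  show "digit_block p n a b = digit_block p V a b"
    by (metis assms digit_block_mod_pow order_refl)
qed

lemma down_adm_lower_upper_iff:
  "down_adm p V {a..b} \<and> down_adm p (down_val p V {a..b}) {Suc b..c}
     \<longleftrightarrow> digit p V a \<noteq> 0 \<and> digit p V (Suc b) \<notin> {0, 1} \<and> digit p V (Suc c) \<noteq> 0"
proof (cases "digit p V a \<noteq> 0 \<and> digit p V (Suc b) \<noteq> 0")
  case True
  then show ?thesis
    using ab bc V down_val_pos[OF p V_nonneg ab]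
    by (simp add: down_adm_atLeastAtMost digit_down_val_Suc_max[OF p V_nonneg ab]
        digit_down_val_above[OF p V_nonneg ab])
next
  case False
  then show ?thesis
    using ab by (auto simp: down_adm_atLeastAtMost)
qed

lemma down_adm_upper_up_adm_lower_iff:
  "down_adm p V {Suc b..c} \<and> up_adm p (down_val p V {Suc b..c}) {a..b}
     \<longleftrightarrow> digit p V a \<noteq> 0 \<and> digit p V (Suc b) \<notin> {0, 1} \<and> digit p V (Suc c) \<noteq> 0"
proof (cases "digit p V (Suc b) \<noteq> 0 \<and> digit p V (Suc c) \<noteq> 0")
  case True
  then show ?thesis
    using ab Suc_b_le_c V p digit_less[of p V "Suc b"] down_val_pos[OF p V_nonneg Suc_b_le_c]
    by (auto simp: down_adm_atLeastAtMost up_adm_atLeastAtMost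
        lower_block_digits_unchanged(1)[OF upper_vals_mod_pow(1)]
        digit_down_val_min[OF p V_nonneg] minus_digit_mod_p)
next
  case False
  then show ?thesis
    using bc by (auto simp: down_adm_atLeastAtMost)
qed

lemma up_adm_upper_lower_iff:
  "up_adm p V {Suc b..c} \<and> up_adm p (up_val p V {Suc b..c}) {a..b}
     \<longleftrightarrow> digit p V a \<noteq> 0 \<and> digit p V (Suc b) \<notin> {0, 1} \<and> digit p V (Suc c) \<noteq> int p - 1"
proof (cases "digit p V (Suc b) \<noteq> 0")
  case True
  then show ?thesis
    using ab Suc_b_le_c V p digit_less[of p V "Suc b"] up_val_pos[OF p V_nonneg Suc_b_le_c]
    by (auto simp: up_adm_atLeastAtMost lower_block_digits_unchanged(1)[OF upper_vals_mod_pow(2)]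
        digit_up_val_min[OF p V_nonneg] minus_digit_mod_p)
next
  case False
  then show ?thesis
    using bc by (auto simp: up_adm_atLeastAtMost)
qed

lemma down_adm_lower_up_adm_upper_iff:
  "down_adm p V {a..b} \<and> up_adm p (down_val p V {a..b}) {Suc b..c}
     \<longleftrightarrow> digit p V a \<noteq> 0 \<and> digit p V (Suc b) \<notin> {0, 1} \<and> digit p V (Suc c) \<noteq> int p - 1"
proof (cases "digit p V a \<noteq> 0 \<and> digit p V (Suc b) \<noteq> 0")
  case True
  then show ?thesis
    using ab bc V p down_val_pos[OF p V_nonneg ab] digit_less[of p V "Suc b"]
    by (simp add: down_adm_atLeastAtMost up_adm_atLeastAtMost
        digit_down_val_Suc_max[OF p V_nonneg ab]
        digit_down_val_above[OF p V_nonneg ab])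
next
  case False
  then show ?thesis
    using ab by (auto simp: down_adm_atLeastAtMost)
qed

lemma down_val_lower_upper_eq:
  assumes "digit p V a \<noteq> 0" "digit p V (Suc b) \<noteq> 0" "digit p V (Suc c) \<noteq> 0"
  shows "down_val p (down_val p V {a..b}) {Suc b..c} = up_val p (down_val p V {Suc b..c}) {a..b}"
proof -
  let ?w = "down_val p V {a..b}" and ?u = "down_val p V {Suc b..c}"
  have w: "0 \<le> ?w" and u: "0 \<le> ?u"
    using down_val_pos[OF p V_nonneg ab] down_val_pos[OF p V_nonneg Suc_b_le_c] assms
    by fastforce+
  have wJ: "down_val p ?w {Suc b..c} = ?w - 2 * int p ^ Suc b * (digit_block p V (Suc b) c - 1)"
    unfolding down_val_atLeastAtMost[OF p w Suc_b_le_c]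
      digit_block_down_val_above[OF p V_nonneg ab assms(1,2) bc] ..
  have uI: "up_val p ?u {a..b} = ?u - 2 * int p ^ a * digit_block p V a b + 2 * int p ^ Suc b"
    unfolding up_val_eq_down_val[OF p u ab] down_val_atLeastAtMost[OF p u ab]
      lower_block_digits_unchanged(2)[OF upper_vals_mod_pow(1)] ..
  have "?w - 2 * int p ^ Suc b * (digit_block p V (Suc b) c - 1)
      = ?u - 2 * int p ^ a * digit_block p V a b + 2 * int p ^ Suc b"
    unfolding down_val_atLeastAtMost[OF p V_nonneg ab]
      down_val_atLeastAtMost[OF p V_nonneg Suc_b_le_c]
    by (simp add: algebra_simps)
  then show ?thesis
    unfolding wJ uI .
qed

lemma up_val_upper_lower_eq:
  assumes "digit p V a \<noteq> 0" "digit p V (Suc b) \<noteq> 0"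
  shows "up_val p (up_val p V {Suc b..c}) {a..b} = up_val p (down_val p V {a..b}) {Suc b..c}"
proof -
  let ?w = "down_val p V {a..b}" and ?z = "up_val p V {Suc b..c}"
  have w: "0 \<le> ?w" and z: "0 \<le> ?z"
    using down_val_pos[OF p V_nonneg ab] up_val_pos[OF p V_nonneg Suc_b_le_c] assms
    by fastforce+
  have wJ: "up_val p ?w {Suc b..c}
      = ?w - 2 * int p ^ Suc b * (digit_block p V (Suc b) c - 1) + 2 * int p ^ Suc c"
    unfolding up_val_eq_down_val[OF p w Suc_b_le_c] down_val_atLeastAtMost[OF p w Suc_b_le_c]
      digit_block_down_val_above[OF p V_nonneg ab assms bc] ..
  have zI: "up_val p ?z {a..b} = ?z - 2 * int p ^ a * digit_block p V a b + 2 * int p ^ Suc b"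
    unfolding up_val_eq_down_val[OF p z ab] down_val_atLeastAtMost[OF p z ab]
      lower_block_digits_unchanged(2)[OF upper_vals_mod_pow(2)] ..
  have "?z - 2 * int p ^ a * digit_block p V a b + 2 * int p ^ Suc b
      = ?w - 2 * int p ^ Suc b * (digit_block p V (Suc b) c - 1) + 2 * int p ^ Suc c"
    unfolding up_val_eq_down_val[OF p V_nonneg Suc_b_le_c]
      down_val_atLeastAtMost[OF p V_nonneg ab] down_val_atLeastAtMost[OF p V_nonneg Suc_b_le_c]
    by (simp add: algebra_simps)
  then show ?thesis
    unfolding wJ zI .
qed

end

lemma consec_adjacentE:
  assumes "consec S" "consec S'" "set_gt S' S" "set_dist S S' = 1"
  obtains a b c where "S = {a..b}" "S' = {Suc b..c}" "a \<le> b" "b < c"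
proof -
  define b m where "b = Max S" and "m = Min S'"
  have S: "S = {Min S..b}" "Min S \<le> b" "b \<in> S"
    and S': "S' = {m..Max S'}" "m \<le> Max S'" "m \<in> S'"
    using assms(1,2) unfolding consec_def b_def m_def by auto
  have "b < m"
    using assms(3) S(3) S'(3) unfolding set_gt_def by blast
  let ?D = "{nat \<bar>int x - int y\<bar> | x y. x \<in> S \<and> y \<in> S'}"
  have "finite ?D"
  proof -
    have "?D = (\<lambda>(x, y). nat \<bar>int x - int y\<bar>) ` (S \<times> S')" by auto
    then show ?thesis using assms(1,2) unfolding consec_def by simp
  qed
  moreover have "m - b \<in> ?D"
    using S(3) S'(3) \<open>b < m\<close> by force
  moreover have "m - b \<le> d" if d: "d \<in> ?D" for d
  proof -
    obtain x y where "x \<in> S" "y \<in> S'" "d = nat \<bar>int x - int y\<bar>"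
      using d by blast
    moreover have "x \<le> b" "m \<le> y"
      using calculation(1,2) S(1) S'(1) by (metis atLeastAtMost_iff)+
    ultimately show ?thesis by simp
  qed
  ultimately have "set_dist S S' = m - b"
    unfolding set_dist_def by (intro Min_eqI) auto
  then have "m = Suc b"
    using assms(4) \<open>b < m\<close> by simp
  then show ?thesis
    using that S S' by simp
qed

theorem lemma2p13:
  fixes p v :: nat and S S' :: "nat set"
  assumes "prime p" and "v \<ge> 1"
    and "consec S" and "consec S'"
    and "set_gt S' S" and "set_dist S S' = 1"
  shows "((down_adm p (int v) S \<and> down_adm p (down_val p (int v) S) S')
            \<longleftrightarrow> (down_adm p (int v) S' \<and> up_adm p (down_val p (int v) S') S))
       \<and> (down_adm p (int v) S \<and> down_adm p (down_val p (int v) S) S'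
            \<longrightarrow> down_val p (down_val p (int v) S) S' = up_val p (down_val p (int v) S') S)
       \<and> ((up_adm p (int v) S' \<and> up_adm p (up_val p (int v) S') S)
            \<longleftrightarrow> (down_adm p (int v) S \<and> up_adm p (down_val p (int v) S) S'))
       \<and> (up_adm p (int v) S' \<and> up_adm p (up_val p (int v) S') S
            \<longrightarrow> up_val p (up_val p (int v) S') S = up_val p (down_val p (int v) S) S')"
proof -
  obtain a b c where S: "S = {a..b}" and S': "S' = {Suc b..c}" and "a \<le> b" "b < c"
    using consec_adjacentE[OF assms(3-6)] .
  have "2 \<le> p" "1 \<le> int v"
    using assms(1,2) prime_ge_2_nat by simp_all
  note facts = down_adm_lower_upper_iff down_adm_upper_up_adm_lower_iff
    up_adm_upper_lower_iff down_adm_lower_up_adm_upper_iff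
    down_val_lower_upper_eq up_val_upper_lower_eq
  show ?thesis
    unfolding S S' using facts[OF \<open>2 \<le> p\<close> \<open>1 \<le> int v\<close> \<open>a \<le> b\<close> \<open>b < c\<close>] by auto
qed

end
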